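(* Let $L$ be a finite-dimensional Lie algebra over a field $F$. If $L$ has a supersolvable maximal subalgebra $M$ with $\eta(L:M)=1$ and $N(L)\not\subseteq M$, then $L$ is supersolvable.
   Context: $N(L)$ denotes the nilradical of $L$ (its largest nilpotent ideal). A Lie algebra is supersolvable if it has a chain of ideals $0=L_0\subset L_1\subset\cdots\subset L_n$ equal to the whole algebra, with successive quotients one-dimensional. For a nonzero subalgebra $X$ of $L$, the strict core $k(X)$ is the sum of all ideals of $L$ that are proper subalgebras of $X$ (it is $0$ if there are none). For a maximal subalgebra $M$, a subalgebra $C$ is a completion of $M$ if $C\not\subseteq M$ but every proper subalgebra of $C$ that is an ideal of $L$ is contained in $M$; an ideal completion is a completion that is an ideal of $L$. The ideal index $\eta(L:M)$ is $\dim(C/k(C))$ for any ideal completion $C$ of $M$ (independent of the choice of $C$). *)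

theory Defs
  imports Complex_Main
begin

text \<open>A Lie algebra over a field: the whole type 'b, with scalar multiplication
  scale (from field 'a) and bracket br.  All notions below are relative to
  (scale, br).\<close>

definition lie_algebra ::
  "('a::field \<Rightarrow> 'b::ab_group_add \<Rightarrow> 'b) \<Rightarrow> ('b \<Rightarrow> 'b \<Rightarrow> 'b) \<Rightarrow> bool" where
  "lie_algebra scale br \<longleftrightarrow>
     vector_space scale \<and>
     (\<forall>x y z. br (x + y) z = br x z + br y z) \<and>
     (\<forall>x y z. br x (y + z) = br x y + br x z) \<and>
     (\<forall>c x y. br (scale c x) y = scale c (br x y)) \<and>
     (\<forall>c x y. br x (scale c y) = scale c (br x y)) \<and>
     (\<forall>x. br x x = 0) \<and>
     (\<forall>x y z. br x (br y z) + br y (br z x) + br z (br x y) = 0)"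

definition finite_dim ::
  "('a::field \<Rightarrow> 'b::ab_group_add \<Rightarrow> 'b) \<Rightarrow> bool" where
  "finite_dim scale \<longleftrightarrow> (\<exists>B. finite B \<and> module.span scale B = UNIV)"

definition lie_subalgebra ::
  "('a::field \<Rightarrow> 'b::ab_group_add \<Rightarrow> 'b) \<Rightarrow> ('b \<Rightarrow> 'b \<Rightarrow> 'b) \<Rightarrow> 'b set \<Rightarrow> bool" where
  "lie_subalgebra scale br S \<longleftrightarrow>
     module.subspace scale S \<and> (\<forall>x\<in>S. \<forall>y\<in>S. br x y \<in> S)"

definition lie_ideal_of ::
  "('a::field \<Rightarrow> 'b::ab_group_add \<Rightarrow> 'b) \<Rightarrow> ('b \<Rightarrow> 'b \<Rightarrow> 'b) \<Rightarrow> 'b set \<Rightarrow> 'b set \<Rightarrow> bool" where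
  "lie_ideal_of scale br A I \<longleftrightarrow>
     module.subspace scale I \<and> I \<subseteq> A \<and> (\<forall>x\<in>A. \<forall>y\<in>I. br x y \<in> I)"

abbreviation lie_ideal where
  "lie_ideal scale br I \<equiv> lie_ideal_of scale br UNIV I"

definition maximal_subalgebra ::
  "('a::field \<Rightarrow> 'b::ab_group_add \<Rightarrow> 'b) \<Rightarrow> ('b \<Rightarrow> 'b \<Rightarrow> 'b) \<Rightarrow> 'b set \<Rightarrow> bool" where
  "maximal_subalgebra scale br M \<longleftrightarrow>
     lie_subalgebra scale br M \<and> M \<noteq> UNIV \<and>
     (\<forall>S. lie_subalgebra scale br S \<and> M \<subseteq> S \<longrightarrow> S = M \<or> S = UNIV)"

fun lower_central ::
  "('a::field \<Rightarrow> 'b::ab_group_add \<Rightarrow> 'b) \<Rightarrow> ('b \<Rightarrow> 'b \<Rightarrow> 'b) \<Rightarrow> 'b set \<Rightarrow> nat \<Rightarrow> 'b set" where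
  "lower_central scale br A 0 = A"
| "lower_central scale br A (Suc k) =
     module.span scale {br x y | x y. x \<in> A \<and> y \<in> lower_central scale br A k}"

definition lie_nilpotent ::
  "('a::field \<Rightarrow> 'b::ab_group_add \<Rightarrow> 'b) \<Rightarrow> ('b \<Rightarrow> 'b \<Rightarrow> 'b) \<Rightarrow> 'b set \<Rightarrow> bool" where
  "lie_nilpotent scale br A \<longleftrightarrow> (\<exists>k. lower_central scale br A k = {0})"

text \<open>Nilradical: the sum of all nilpotent ideals (in finite dimension this is the
  largest nilpotent ideal).\<close>
definition nilradical ::
  "('a::field \<Rightarrow> 'b::ab_group_add \<Rightarrow> 'b) \<Rightarrow> ('b \<Rightarrow> 'b \<Rightarrow> 'b) \<Rightarrow> 'b set" where
  "nilradical scale br =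
     module.span scale (\<Union>{I. lie_ideal scale br I \<and> lie_nilpotent scale br I})"

definition supersolvable ::
  "('a::field \<Rightarrow> 'b::ab_group_add \<Rightarrow> 'b) \<Rightarrow> ('b \<Rightarrow> 'b \<Rightarrow> 'b) \<Rightarrow> 'b set \<Rightarrow> bool" where
  "supersolvable scale br A \<longleftrightarrow>
     (\<exists>n C. C 0 = {0} \<and> C n = A \<and>
        (\<forall>i\<le>n. lie_ideal_of scale br A (C i)) \<and>
        (\<forall>i<n. C i \<subseteq> C (Suc i) \<and>
               vector_space.dim scale (C (Suc i)) = vector_space.dim scale (C i) + 1))"

definition strict_core ::
  "('a::field \<Rightarrow> 'b::ab_group_add \<Rightarrow> 'b) \<Rightarrow> ('b \<Rightarrow> 'b \<Rightarrow> 'b) \<Rightarrow> 'b set \<Rightarrow> 'b set" where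
  "strict_core scale br X =
     module.span scale (\<Union>{I. lie_ideal scale br I \<and> I \<subset> X})"

definition completion ::
  "('a::field \<Rightarrow> 'b::ab_group_add \<Rightarrow> 'b) \<Rightarrow> ('b \<Rightarrow> 'b \<Rightarrow> 'b) \<Rightarrow> 'b set \<Rightarrow> 'b set \<Rightarrow> bool" where
  "completion scale br M C \<longleftrightarrow>
     lie_subalgebra scale br C \<and> \<not> C \<subseteq> M \<and>
     (\<forall>I. lie_ideal scale br I \<and> I \<subset> C \<longrightarrow> I \<subseteq> M)"

definition ideal_completion ::
  "('a::field \<Rightarrow> 'b::ab_group_add \<Rightarrow> 'b) \<Rightarrow> ('b \<Rightarrow> 'b \<Rightarrow> 'b) \<Rightarrow> 'b set \<Rightarrow> 'b set \<Rightarrow> bool" where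
  "ideal_completion scale br M C \<longleftrightarrow>
     completion scale br M C \<and> lie_ideal scale br C"

text \<open>Ideal index eta(L:M) = dim(C / k(C)) = dim C - dim k(C) for an ideal completion C
  (k(C) \<subseteq> C); the choice of C is irrelevant by the paper.\<close>
definition ideal_index ::
  "('a::field \<Rightarrow> 'b::ab_group_add \<Rightarrow> 'b) \<Rightarrow> ('b \<Rightarrow> 'b \<Rightarrow> 'b) \<Rightarrow> 'b set \<Rightarrow> nat" where
  "ideal_index scale br M =
     (SOME n. \<exists>C. ideal_completion scale br M C \<and>
        n = vector_space.dim scale C - vector_space.dim scale (strict_core scale br C))"

end

theory Submission
  imports Defs
begin

text \<open>Let I be a nilpotent ideal of L not contained in M, so L = I + M, and let (E_j) be a flag of
ideals of M with one-dimensional steps. If A/B is a chief factor of L with A \<subseteq> M, then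
[I,A] \<subseteq> B: otherwise B + [I,A] = A, and iterating gives A \<subseteq> I^k + B for all k, hence A \<subseteq> B.
Consequently every (E_j \<inter> A) + B is an ideal of L between B and A, and where this sequence
jumps from B to A it grows by at most one dimension, so dim(A/B) = 1. By induction every
ideal of L inside M is the top of a flag of ideals of L with one-dimensional steps; this
applies to the strict core k(C) of an ideal completion C, which lies in M. As \<eta>(L:M) = 1 the
flag extends to C, and since L = C + M the ideals C + E_j continue it up to L.\<close>

lemma nat_exists_step: "P 0 \<Longrightarrow> \<not> P n \<Longrightarrow> \<exists>j<n. P j \<and> \<not> P (Suc j)"
  by (induction n) (auto simp: less_Suc_eq)

locale fd_lie_algebra = vector_space scale
  for scale :: "'a::field \<Rightarrow> 'b::ab_group_add \<Rightarrow> 'b" +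
  fixes br :: "'b \<Rightarrow> 'b \<Rightarrow> 'b"
  assumes br_add_left: "br (x + y) z = br x z + br y z"
    and br_add_right: "br x (y + z) = br x y + br x z"
    and br_scale_left: "br (scale c x) y = scale c (br x y)"
    and br_scale_right: "br x (scale c y) = scale c (br x y)"
    and br_self: "br x x = 0"
    and jacobi: "br x (br y z) + br y (br z x) + br z (br x y) = 0"
    and finite_spanning_set: "\<exists>B. finite B \<and> span B = UNIV"
begin

definition fin_basis :: "'b set" where
  "fin_basis = (SOME B. finite B \<and> independent B \<and> span B = UNIV)"

lemma fin_basis: "finite fin_basis \<and> independent fin_basis \<and> span fin_basis = UNIV"
proof -
  obtain B where B: "finite B" "span B = UNIV" using finite_spanning_set by blast
  obtain B' where "B' \<subseteq> B" "independent B'" "B \<subseteq> span B'"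
    using maximal_independent_subset by blast
  then have "finite B' \<and> independent B' \<and> span B' = UNIV"
    using B by (metis finite_subset span_mono span_span top.extremum_uniqueI)
  then show ?thesis unfolding fin_basis_def by (rule someI)
qed

sublocale fd: finite_dimensional_vector_space scale fin_basis
  using fin_basis by unfold_locales auto

lemma br_zero_left [simp]: "br 0 x = 0"
  by (metis add_cancel_right_right br_add_left)

lemma br_zero_right [simp]: "br x 0 = 0"
  by (metis add_cancel_right_right br_add_right)

lemma br_antisym: "br x y = - br y x"
proof -
  have "br x x + br y x + (br x y + br y y) = 0"
    using br_self[of "x + y"] by (simp only: br_add_left br_add_right)
  then show ?thesis by (simp add: br_self add.commute eq_neg_iff_add_eq_0)
qed

lemma br_span_right:
  assumes "x \<in> span S" "subspace T" "\<And>s. s \<in> S \<Longrightarrow> br l s \<in> T"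
  shows "br l x \<in> T"
proof -
  have "subspace {x. br l x \<in> T}"
    using assms(2) unfolding subspace_def
    by (auto simp: br_add_right br_scale_right subspace_0 subspace_add subspace_scale)
  then show ?thesis using assms(1,3) span_subspace_induct by blast
qed

lemma br_span_left:
  assumes "x \<in> span S" "subspace T" "\<And>s. s \<in> S \<Longrightarrow> br s l \<in> T"
  shows "br x l \<in> T"
proof -
  have "subspace {x. br x l \<in> T}"
    using assms(2) unfolding subspace_def
    by (auto simp: br_add_left br_scale_left subspace_0 subspace_add subspace_scale)
  then show ?thesis using assms(1,3) span_subspace_induct by blast
qed

abbreviation ideal :: "'b set \<Rightarrow> bool" where
  "ideal I \<equiv> lie_ideal_of scale br UNIV I"

lemma ideal_iff: "ideal I \<longleftrightarrow> subspace I \<and> (\<forall>x y. y \<in> I \<longrightarrow> br x y \<in> I)"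
  unfolding lie_ideal_of_def by auto

lemma ideal_br_right: "ideal I \<Longrightarrow> y \<in> I \<Longrightarrow> br x y \<in> I"
  by (simp add: ideal_iff)

lemma ideal_br_left: "ideal I \<Longrightarrow> y \<in> I \<Longrightarrow> br y x \<in> I"
  by (metis br_antisym ideal_iff subspace_neg)

lemma ideal_span:
  assumes "\<And>x s. s \<in> S \<Longrightarrow> br x s \<in> span S"
  shows "ideal (span S)"
  unfolding ideal_iff using assms by (blast intro: br_span_right)

lemma dim_less_ideal: "ideal A \<Longrightarrow> ideal B \<Longrightarrow> B \<subset> A \<Longrightarrow> dim B < dim A"
  using fd.dim_psubset[of B A] by (simp add: ideal_iff span_eq_iff[THEN iffD2])

lemma ideal_0: "ideal {0}"
  by (simp add: ideal_iff)

lemma ideal_UNIV: "ideal UNIV"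
  by (simp add: ideal_iff)

definition ideal_flag :: "'b set \<Rightarrow> (nat \<Rightarrow> 'b set) \<Rightarrow> nat \<Rightarrow> bool" where
  "ideal_flag X E n \<longleftrightarrow> E 0 = {0} \<and> (\<forall>i\<le>n. lie_ideal_of scale br X (E i)) \<and>
     (\<forall>i<n. E i \<subseteq> E (Suc i) \<and> dim (E (Suc i)) = dim (E i) + 1)"

lemma supersolvable_iff_ideal_flag:
  "supersolvable scale br A \<longleftrightarrow> (\<exists>n E. ideal_flag A E n \<and> E n = A)"
  unfolding supersolvable_def ideal_flag_def by blast

definition has_ideal_flag :: "'b set \<Rightarrow> bool" where
  "has_ideal_flag A \<longleftrightarrow> (\<exists>n E. ideal_flag UNIV E n \<and> E n = A)"

lemma supersolvable_UNIV_iff: "supersolvable scale br UNIV \<longleftrightarrow> has_ideal_flag UNIV"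
  by (simp add: supersolvable_iff_ideal_flag has_ideal_flag_def)

lemma has_ideal_flag_0: "has_ideal_flag {0}"
  unfolding has_ideal_flag_def ideal_flag_def
  by (rule exI[of _ 0], rule exI[of _ "\<lambda>_. {0}"]) (simp add: ideal_0)

lemma has_ideal_flag_extend:
  assumes "has_ideal_flag A" "ideal A'" "A \<subseteq> A'" "dim A' \<le> dim A + 1"
  shows "has_ideal_flag A'"
proof -
  obtain n E where E: "ideal_flag UNIV E n" "E n = A"
    using assms(1) unfolding has_ideal_flag_def by blast
  show ?thesis
  proof (cases "dim A' \<le> dim A")
    case True
    have "subspace A" using E unfolding ideal_flag_def lie_ideal_of_def by auto
    then have "A = A'" using fd.subspace_dim_equal assms True by (auto simp: ideal_iff)
    then show ?thesis using assms by simp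
  next
    case False
    then have "dim A' = dim A + 1" using assms(4) by simp
    then have "ideal_flag UNIV (E(Suc n := A')) (Suc n)"
      using E assms(2,3) unfolding ideal_flag_def by (auto simp: le_Suc_eq less_Suc_eq)
    then show ?thesis unfolding has_ideal_flag_def by (metis fun_upd_same)
  qed
qed

lemma dim_le_insert: "X \<subseteq> span (insert w Y) \<Longrightarrow> dim X \<le> dim Y + 1"
  by (metis Suc_eq_plus1 fd.dim_insert fd.dim_mono le_Suc_eq)

lemma dim_span_Un_insert_le:
  assumes "X \<subseteq> span (insert w Y)"
  shows "dim (span (X \<union> Z)) \<le> dim (span (Y \<union> Z)) + 1"
proof -
  have "span (X \<union> Z) \<subseteq> span (insert w (Y \<union> Z))"
    using assms by (intro span_minimal) (auto intro: span_base span_mono[THEN subsetD, rotated])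
  then show ?thesis using dim_le_insert by (metis dim_span)
qed

lemma span_insert_eq_of_dim_Suc:
  assumes "subspace U" "subspace U'" "U \<subseteq> U'" "dim U' = dim U + 1" "w \<in> U'" "w \<notin> U"
  shows "U' = span (insert w U)"
proof -
  have sub: "span (insert w U) \<subseteq> U'" using assms by (intro span_minimal) auto
  have "dim (span (insert w U)) = dim U + 1"
    using assms fd.dim_insert by (simp add: span_eq_iff[THEN iffD2])
  then show ?thesis using fd.subspace_dim_equal[OF subspace_span assms(2) sub] assms(4) by simp
qed

lemma Int_subset_span_insert:
  assumes "subspace U" "subspace U'" "U \<subseteq> U'" "dim U' = dim U + 1" "subspace A"
  obtains v where "U' \<inter> A \<subseteq> span (insert v (U \<inter> A))"
proof (cases "U' \<inter> A \<subseteq> U")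
  case True
  then show ?thesis by (intro that[of 0]) (auto intro: span_base)
next
  case False
  then obtain v where v: "v \<in> U' \<inter> A" "v \<notin> U" by blast
  have "U' \<inter> A \<subseteq> span (insert v (U \<inter> A))"
  proof
    fix x assume x: "x \<in> U' \<inter> A"
    then obtain k where k: "x - scale k v \<in> span U"
      using span_insert_eq_of_dim_Suc[OF assms(1-4)] v span_breakdown_eq by blast
    have "x - scale k v \<in> A" using x v assms(5) by (auto intro: subspace_diff subspace_scale)
    then have "x - scale k v \<in> span (U \<inter> A)"
      using k assms(1) by (simp add: span_base span_eq_iff[THEN iffD2])
    then show "x \<in> span (insert v (U \<inter> A))" using span_breakdown_eq by blast
  qed
  then show ?thesis by (rule that)
qed

lemma span_Un_maximal_subalgebra:
  assumes "maximal_subalgebra scale br M" "ideal J" "\<not> J \<subseteq> M"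
  shows "span (J \<union> M) = UNIV"
proof -
  have M: "subspace M" "\<And>x y. x \<in> M \<Longrightarrow> y \<in> M \<Longrightarrow> br x y \<in> M"
    using assms(1) unfolding maximal_subalgebra_def lie_subalgebra_def by auto
  let ?S = "span (J \<union> M)"
  have "br x y \<in> ?S" if "x \<in> ?S" "y \<in> ?S" for x y
  proof (rule br_span_left[OF that(1) subspace_span])
    fix s assume s: "s \<in> J \<union> M"
    show "br s y \<in> ?S"
    proof (rule br_span_right[OF that(2) subspace_span])
      fix s' assume "s' \<in> J \<union> M"
      then have "br s s' \<in> J \<union> M" using s M assms(2) ideal_br_left ideal_br_right by blast
      then show "br s s' \<in> ?S" by (rule span_base)
    qed
  qed
  then have "lie_subalgebra scale br ?S" unfolding lie_subalgebra_def by simp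
  moreover have "M \<subseteq> ?S" "?S \<noteq> M" using assms(3) span_superset by blast+
  ultimately show ?thesis using assms(1) unfolding maximal_subalgebra_def by blast
qed

lemma ideal_span_Int_Un:
  assumes "span (I \<union> M) = UNIV" "subspace I" "subspace M"
    and "lie_ideal_of scale br M F" "ideal A" "ideal B"
    and "\<And>i s. i \<in> I \<Longrightarrow> s \<in> F \<inter> A \<Longrightarrow> br i s \<in> B"
  shows "ideal (span ((F \<inter> A) \<union> B))"
proof (rule ideal_span)
  fix x s assume s: "s \<in> (F \<inter> A) \<union> B"
  have "x \<in> span (I \<union> M)" using assms(1) by simp
  then obtain i m where im: "i \<in> I" "m \<in> M" "x = i + m"
    using assms(2,3) unfolding span_Un by (auto simp: span_eq_iff[THEN iffD2])
  show "br x s \<in> span ((F \<inter> A) \<union> B)"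
    using s
  proof
    assume s: "s \<in> F \<inter> A"
    have "br i s \<in> B" using assms(7) im s by blast
    moreover have "br m s \<in> F \<inter> A"
      using assms(4,5) im s ideal_br_right unfolding lie_ideal_of_def by blast
    ultimately show ?thesis unfolding im(3) br_add_left
      by (intro span_add) (auto intro: span_base)
  next
    assume "s \<in> B"
    then show ?thesis using assms(6) ideal_br_right span_base by blast
  qed
qed

definition bracket_set :: "'b set \<Rightarrow> 'b set \<Rightarrow> 'b set" where
  "bracket_set X Y = {br x y | x y. x \<in> X \<and> y \<in> Y}"

lemma ideal_span_Un_bracket_set:
  assumes "ideal I" "ideal A" "ideal B"
  shows "ideal (span (B \<union> bracket_set I A))"
proof (rule ideal_span)
  fix x s assume "s \<in> B \<union> bracket_set I A"
  then show "br x s \<in> span (B \<union> bracket_set I A)"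
  proof
    assume "s \<in> B"
    then show ?thesis using assms(3) ideal_br_right span_base by blast
  next
    assume "s \<in> bracket_set I A"
    then obtain i a where ia: "i \<in> I" "a \<in> A" "s = br i a" unfolding bracket_set_def by blast
    have "br x (br i a) = - br i (br a x) + br (br x i) a"
      using jacobi[of x i a] br_antisym[of a "br x i"]
      by (simp add: eq_neg_iff_add_eq_0 algebra_simps)
    moreover have "br i (br a x) \<in> bracket_set I A" "br (br x i) a \<in> bracket_set I A"
      unfolding bracket_set_def using ia assms(1,2) ideal_br_left ideal_br_right by blast+
    ultimately show ?thesis using ia by (simp add: span_base span_diff)
  qed
qed

lemma subset_span_lower_central:
  assumes "ideal I" "ideal B" "A \<subseteq> span (B \<union> bracket_set I A)"
  shows "A \<subseteq> span (lower_central scale br I k \<union> B)"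
proof (induction k)
  case 0
  have "span (B \<union> bracket_set I A) \<subseteq> span (I \<union> B)"
    unfolding bracket_set_def using assms(1) by (intro span_mono) (auto intro: ideal_br_left)
  then show ?case using assms(3) by simp
next
  case (Suc k)
  let ?S = "span (lower_central scale br I (Suc k) \<union> B)"
  have "bracket_set I A \<subseteq> ?S"
  proof
    fix s assume "s \<in> bracket_set I A"
    then obtain i a where ia: "i \<in> I" "a \<in> A" "s = br i a" unfolding bracket_set_def by blast
    have "a \<in> span (lower_central scale br I k \<union> B)" using Suc ia by blast
    then show "s \<in> ?S" unfolding ia(3)
    proof (rule br_span_right[OF _ subspace_span])
      fix y assume "y \<in> lower_central scale br I k \<union> B"
      then have "br i y \<in> lower_central scale br I (Suc k) \<union> B"
        using ia assms(2) ideal_br_right by (auto intro: span_base)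
      then show "br i y \<in> ?S" by (rule span_base)
    qed
  qed
  then have "span (B \<union> bracket_set I A) \<subseteq> ?S"
    by (intro span_minimal) (auto intro: span_base)
  then show ?case using assms(3) by blast
qed

lemma nilpotent_ideal_nakayama:
  assumes "ideal I" "lie_nilpotent scale br I" "ideal B" "A \<subseteq> span (B \<union> bracket_set I A)"
  shows "A \<subseteq> B"
proof -
  obtain k where "lower_central scale br I k = {0}"
    using assms(2) unfolding lie_nilpotent_def by blast
  then have "A \<subseteq> span ({0} \<union> B)" using subset_span_lower_central[OF assms(1,3,4)] by metis
  then show ?thesis using assms(3) by (simp add: ideal_iff span_eq_iff[THEN iffD2])
qed

definition chief_factor :: "'b set \<Rightarrow> 'b set \<Rightarrow> bool" where
  "chief_factor A B \<longleftrightarrow> ideal A \<and> ideal B \<and> B \<subset> A \<and>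
     (\<forall>T. ideal T \<and> B \<subseteq> T \<and> T \<subseteq> A \<longrightarrow> T = B \<or> T = A)"

lemma exists_chief_factor:
  assumes "ideal A" "A \<noteq> {0}"
  obtains B where "chief_factor A B"
proof -
  let ?P = "\<lambda>B. ideal B \<and> B \<subset> A"
  have "?P {0}" using assms subspace_0 by (auto simp: ideal_iff ideal_0)
  moreover have "dim B < dim A + 1" if "?P B" for B
    using that fd.dim_subset[of B A] by auto
  ultimately obtain B where B: "?P B" "\<And>T. ?P T \<Longrightarrow> dim T \<le> dim B"
    using ex_has_greatest_nat[of ?P "{0}" dim "dim A + 1"] by blast
  have "T = B \<or> T = A" if "ideal T" "B \<subseteq> T" "T \<subseteq> A" for T
  proof (cases "T = A")
    case False
    then have "dim T \<le> dim B" using B(2) that by blast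
    moreover have "subspace B" "subspace T" using B(1) that(1) by (auto simp: ideal_iff)
    ultimately show ?thesis using fd.subspace_dim_equal that(2) by blast
  qed simp
  then have "chief_factor A B" using assms(1) B(1) unfolding chief_factor_def by blast
  then show ?thesis by (rule that)
qed

lemma bracket_set_nilpotent_chief_factor:
  assumes "ideal I" "lie_nilpotent scale br I" "chief_factor A B"
  shows "bracket_set I A \<subseteq> B"
proof -
  let ?T = "span (B \<union> bracket_set I A)"
  have AB: "ideal A" "ideal B" "B \<subset> A" using assms(3) unfolding chief_factor_def by auto
  have "?T \<subseteq> A"
    using AB unfolding bracket_set_def
    by (intro span_minimal) (auto intro: ideal_br_right simp: ideal_iff)
  moreover have "B \<subseteq> ?T" using span_superset by blast
  moreover have "ideal ?T" using ideal_span_Un_bracket_set assms(1) AB by blast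
  ultimately have "?T = B \<or> ?T = A" using assms(3) unfolding chief_factor_def by blast
  moreover have "\<not> A \<subseteq> B" using AB by blast
  ultimately have "?T = B" using nilpotent_ideal_nakayama[OF assms(1,2) AB(2)] by blast
  then show ?thesis using span_superset by blast
qed

lemma span_Int_Un_chief_factor:
  assumes "chief_factor A B" "bracket_set I A \<subseteq> B"
    and "ideal I" "span (I \<union> M) = UNIV" "subspace M" "lie_ideal_of scale br M F"
  shows "span ((F \<inter> A) \<union> B) = B \<or> span ((F \<inter> A) \<union> B) = A"
proof -
  have AB: "ideal A" "ideal B" using assms(1) unfolding chief_factor_def by auto
  have "ideal (span ((F \<inter> A) \<union> B))"
  proof (rule ideal_span_Int_Un[OF assms(4) _ assms(5,6) AB])
    show "subspace I" using assms(3) by (simp add: ideal_iff)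
    show "br i s \<in> B" if "i \<in> I" "s \<in> F \<inter> A" for i s
      using assms(2) that unfolding bracket_set_def by blast
  qed
  moreover have "B \<subseteq> span ((F \<inter> A) \<union> B)" using span_superset by blast
  moreover have "span ((F \<inter> A) \<union> B) \<subseteq> A"
    using AB assms(1) unfolding chief_factor_def by (intro span_minimal) (auto simp: ideal_iff)
  ultimately show ?thesis using assms(1) unfolding chief_factor_def by blast
qed

lemma dim_chief_factor_le:
  assumes "chief_factor A B" "A \<subseteq> M"
    and "ideal I" "lie_nilpotent scale br I" "span (I \<union> M) = UNIV" "subspace M"
    and "ideal_flag M E n" "E n = M"
  shows "dim A \<le> dim B + 1"
proof -
  have AB: "ideal A" "ideal B" "B \<subset> A" using assms(1) unfolding chief_factor_def by auto
  define S where "S j = span ((E j \<inter> A) \<union> B)" for j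
  have S: "S j = B \<or> S j = A" if "j \<le> n" for j
    unfolding S_def using assms(7) that
    by (intro span_Int_Un_chief_factor[OF assms(1) _ assms(3,5,6)]
        bracket_set_nilpotent_chief_factor[OF assms(3,4,1)]) (simp add: ideal_flag_def)
  have "E 0 \<inter> A \<union> B = B" "E n \<inter> A \<union> B = A"
    using assms(2,7,8) AB unfolding ideal_flag_def by (auto simp: ideal_iff subspace_0)
  then have "S 0 = B" "S n \<noteq> B"
    unfolding S_def using AB by (simp_all add: ideal_iff span_eq_iff[THEN iffD2])
  then obtain j where j: "j < n" "S j = B" "S (Suc j) \<noteq> B"
    using nat_exists_step[of "\<lambda>j. S j = B" n] by blast
  then have "S (Suc j) = A" using S[of "Suc j"] by simp
  have flag_step: "subspace (E j)" "subspace (E (Suc j))" "E j \<subseteq> E (Suc j)"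
    "dim (E (Suc j)) = dim (E j) + 1"
    using assms(7) j(1) unfolding ideal_flag_def lie_ideal_of_def by auto
  obtain v where "E (Suc j) \<inter> A \<subseteq> span (insert v (E j \<inter> A))"
    using Int_subset_span_insert[OF flag_step] AB(1) by (auto simp: ideal_iff)
  then have "dim (S (Suc j)) \<le> dim (S j) + 1"
    unfolding S_def by (rule dim_span_Un_insert_le)
  then show ?thesis using j \<open>S (Suc j) = A\<close> by simp
qed

lemma has_ideal_flag_of_subset:
  assumes "ideal I" "lie_nilpotent scale br I" "span (I \<union> M) = UNIV" "subspace M"
    and "ideal_flag M E n" "E n = M"
  shows "ideal A \<Longrightarrow> A \<subseteq> M \<Longrightarrow> has_ideal_flag A"
proof (induction "dim A" arbitrary: A rule: less_induct)
  case less
  show ?case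
  proof (cases "A = {0}")
    case True
    then show ?thesis using has_ideal_flag_0 by simp
  next
    case False
    then obtain B where B: "chief_factor A B" using exists_chief_factor[OF less(2)] by blast
    then have B': "ideal B" "B \<subset> A" unfolding chief_factor_def by auto
    have "has_ideal_flag B"
      using less(1)[OF dim_less_ideal[OF less(2) B'] B'(1)] B'(2) less(3) by blast
    moreover have "dim A \<le> dim B + 1" using dim_chief_factor_le[OF B less(3) assms] .
    ultimately show ?thesis using has_ideal_flag_extend[OF _ less(2)] B'(2) by blast
  qed
qed

lemma has_ideal_flag_span_Un:
  assumes "has_ideal_flag C" "ideal C" "span (C \<union> M) = UNIV" "subspace M" "ideal_flag M E n"
  shows "j \<le> n \<Longrightarrow> has_ideal_flag (span (E j \<union> C))"
proof (induction j)
  case 0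
  have "E 0 \<union> C = C"
    using assms(2,5) unfolding ideal_flag_def by (auto simp: ideal_iff subspace_0)
  then show ?case using assms(1,2) by (simp add: ideal_iff span_eq_iff[THEN iffD2])
next
  case (Suc j)
  have flag_step: "subspace (E j)" "subspace (E (Suc j))" "E j \<subseteq> E (Suc j)"
    "dim (E (Suc j)) = dim (E j) + 1" "lie_ideal_of scale br M (E (Suc j))"
    using assms(5) Suc.prems unfolding ideal_flag_def lie_ideal_of_def by auto
  have "ideal (span ((E (Suc j) \<inter> UNIV) \<union> C))"
    using assms(2) by (intro ideal_span_Int_Un[OF assms(3) _ assms(4) flag_step(5) ideal_UNIV])
      (auto simp: ideal_iff intro: ideal_br_left)
  then have "ideal (span (E (Suc j) \<union> C))" by simp
  moreover have "span (E j \<union> C) \<subseteq> span (E (Suc j) \<union> C)"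
    using flag_step(3) by (intro span_mono) blast
  moreover obtain v where "E (Suc j) \<subseteq> span (insert v (E j))"
    using Int_subset_span_insert[OF flag_step(1-4) subspace_UNIV] by (metis Int_UNIV_right)
  then have "dim (span (E (Suc j) \<union> C)) \<le> dim (span (E j \<union> C)) + 1"
    by (rule dim_span_Un_insert_le)
  moreover have "has_ideal_flag (span (E j \<union> C))" using Suc by simp
  ultimately show ?case using has_ideal_flag_extend by blast
qed

lemma exists_ideal_completion:
  assumes "M \<noteq> UNIV"
  obtains C where "ideal_completion scale br M C"
proof -
  let ?Q = "\<lambda>C. ideal C \<and> \<not> C \<subseteq> M"
  have "?Q UNIV" using assms ideal_UNIV by blast
  then obtain C where C: "?Q C" "\<And>D. ?Q D \<Longrightarrow> dim C \<le> dim D"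
    using ex_has_least_nat[of ?Q UNIV dim] by blast
  have "J \<subseteq> M" if "ideal J" "J \<subset> C" for J
  proof (rule ccontr)
    assume "\<not> J \<subseteq> M"
    then have "dim C \<le> dim J" using C(2) that(1) by blast
    moreover have "dim J < dim C" using that C(1) dim_less_ideal by blast
    ultimately show False by simp
  qed
  then have "ideal_completion scale br M C"
    using C(1) unfolding ideal_completion_def completion_def lie_subalgebra_def
    by (auto simp: ideal_iff)
  then show ?thesis by (rule that)
qed

lemma ideal_completion_of_ideal_index_one:
  assumes "ideal_index scale br M = 1" "M \<noteq> UNIV"
  obtains C where "ideal_completion scale br M C"
    "dim C = dim (strict_core scale br C) + 1"
proof -
  obtain C0 where "ideal_completion scale br M C0" using exists_ideal_completion assms(2) .
  then have "\<exists>k C. ideal_completion scale br M C \<and> k = dim C - dim (strict_core scale br C)"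
    by blast
  from someI_ex[OF this] obtain C where C: "ideal_completion scale br M C"
    "dim C - dim (strict_core scale br C) = 1"
    using assms(1) unfolding ideal_index_def by auto
  then have "dim C = dim (strict_core scale br C) + 1" by simp
  with C(1) show ?thesis by (rule that)
qed

lemma ideal_strict_core: "ideal (strict_core scale br C)"
  unfolding strict_core_def
  by (rule ideal_span) (auto intro: span_base ideal_br_right)

lemma strict_core_subset: "subspace C \<Longrightarrow> strict_core scale br C \<subseteq> C"
  unfolding strict_core_def by (intro span_minimal) auto

lemma strict_core_subset_of_completion:
  "completion scale br M C \<Longrightarrow> subspace M \<Longrightarrow> strict_core scale br C \<subseteq> M"
  unfolding strict_core_def completion_def by (intro span_minimal) auto

lemma exists_nilpotent_ideal_not_subset:
  assumes "\<not> nilradical scale br \<subseteq> M" "subspace M"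
  obtains I where "ideal I" "lie_nilpotent scale br I" "\<not> I \<subseteq> M"
proof -
  have "\<not> \<Union>{I. ideal I \<and> lie_nilpotent scale br I} \<subseteq> M"
    using assms span_minimal[of _ M] unfolding nilradical_def by blast
  then obtain I where "ideal I" "lie_nilpotent scale br I" "\<not> I \<subseteq> M" by blast
  then show ?thesis by (rule that)
qed

end

lemma fd_lie_algebraI: "lie_algebra scale br \<Longrightarrow> finite_dim scale \<Longrightarrow> fd_lie_algebra scale br"
  unfolding lie_algebra_def finite_dim_def fd_lie_algebra_def fd_lie_algebra_axioms_def by auto

theorem theorem2p9:
  fixes scale :: "'a::field \<Rightarrow> 'b::ab_group_add \<Rightarrow> 'b"
    and br :: "'b \<Rightarrow> 'b \<Rightarrow> 'b"
    and M :: "'b set"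
  assumes "lie_algebra scale br"
    and "finite_dim scale"
    and "maximal_subalgebra scale br M"
    and "supersolvable scale br M"
    and "ideal_index scale br M = 1"
    and "\<not> nilradical scale br \<subseteq> M"
  shows "supersolvable scale br UNIV"
proof -
  interpret fd_lie_algebra scale br using assms(1,2) by (rule fd_lie_algebraI)
  have M: "subspace M" "M \<noteq> UNIV"
    using assms(3) unfolding maximal_subalgebra_def lie_subalgebra_def by auto
  obtain I where I: "ideal I" "lie_nilpotent scale br I" "\<not> I \<subseteq> M"
    using exists_nilpotent_ideal_not_subset assms(6) M(1) .
  obtain n E where E: "ideal_flag M E n" "E n = M"
    using assms(4) supersolvable_iff_ideal_flag by blast
  obtain C where C: "ideal_completion scale br M C" "dim C = dim (strict_core scale br C) + 1"
    using ideal_completion_of_ideal_index_one assms(5) M(2) .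
  then have C_ideal: "ideal C" and C_compl: "completion scale br M C"
    unfolding ideal_completion_def by auto
  have "has_ideal_flag (strict_core scale br C)"
    using has_ideal_flag_of_subset[OF I(1,2) span_Un_maximal_subalgebra[OF assms(3) I(1,3)] M(1) E]
      ideal_strict_core strict_core_subset_of_completion[OF C_compl M(1)] by blast
  then have "has_ideal_flag C"
    using has_ideal_flag_extend ideal_strict_core strict_core_subset C_ideal C(2)
    by (simp add: ideal_iff)
  moreover have CM: "span (C \<union> M) = UNIV"
    using span_Un_maximal_subalgebra assms(3) C_ideal C_compl unfolding completion_def by blast
  ultimately have "has_ideal_flag (span (E n \<union> C))"
    using has_ideal_flag_span_Un C_ideal M(1) E(1) by blast
  then show ?thesis using CM E(2) supersolvable_UNIV_iff by (simp add: Un_commute)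
qed

end
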